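(* Let $\mathcal A,\mathcal B\subset 2^{[n]}$ be cross-IU families (for all $A\in\mathcal A$, $B\in\mathcal B$: $A\cap B\neq\emptyset$ and $A\cup B\neq[n]$) with $|\mathcal A|\ge|\mathcal B|$. Then $$|\mathcal A|+3|\mathcal B|\le 2^n.$$
   Context: $[n]=\{1,\dots,n\}$ and $2^{[n]}$ is its power set. *)

theory Defs
  imports Main
begin

definition cross_IU :: "nat \<Rightarrow> nat set set \<Rightarrow> nat set set \<Rightarrow> bool" where
  "cross_IU n \<A> \<B> \<longleftrightarrow>
     (\<forall>A\<in>\<A>. \<forall>B\<in>\<B>. A \<inter> B \<noteq> {} \<and> A \<union> B \<noteq> {1..n})"

end

theory Submission
  imports Defs Complex_Main
begin

(* Enlarge \<A> to its up-closure U and down-closure D inside 2^[n], and likewise \<B> to U' and D'.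
   Cross-intersection means no member of U has its complement in U', so |U| + |U'| \<le> 2^n;
   cross-union gives |D| + |D'| \<le> 2^n in the same way. The Harris-Kleitman inequality
   |U \<inter> D| 2^n \<le> |U| |D| for an up-set and a down-set, applied to \<A> \<subseteq> U \<inter> D and
   \<B> \<subseteq> U' \<inter> D', gives |\<A>| 2^n \<le> |U| |D| and |\<B>| 2^n \<le> (2^n - |U|)(2^n - |D|).
   Together with |\<B>| \<le> |\<A>| and 4xy \<le> (x + y)^2 these force |\<A>| + 3|\<B>| \<le> 2^n. *)

definition is_up_set :: "'a set \<Rightarrow> 'a set set \<Rightarrow> bool" where
  "is_up_set S U \<longleftrightarrow> U \<subseteq> Pow S \<and> (\<forall>X\<in>U. \<forall>Y. X \<subseteq> Y \<longrightarrow> Y \<subseteq> S \<longrightarrow> Y \<in> U)"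

definition is_down_set :: "'a set \<Rightarrow> 'a set set \<Rightarrow> bool" where
  "is_down_set S D \<longleftrightarrow> D \<subseteq> Pow S \<and> (\<forall>X\<in>D. \<forall>Y. Y \<subseteq> X \<longrightarrow> Y \<in> D)"

lemma card_split_by_element:
  assumes "finite S" "x \<notin> S" "F \<subseteq> Pow (insert x S)"
  shows "card F = card {Y \<in> Pow S. Y \<in> F} + card {Y \<in> Pow S. insert x Y \<in> F}"
proof -
  let ?F0 = "{Y \<in> Pow S. Y \<in> F}" and ?F1 = "{Y \<in> Pow S. insert x Y \<in> F}"
  have "F = ?F0 \<union> insert x ` ?F1"
  proof (intro equalityI subsetI)
    fix X assume "X \<in> F"
    show "X \<in> ?F0 \<union> insert x ` ?F1"
    proof (cases "x \<in> X")
      case True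
      then have "X - {x} \<in> ?F1"
        using \<open>X \<in> F\<close> assms(3) by (auto simp: insert_absorb)
      then have "insert x (X - {x}) \<in> insert x ` ?F1"
        by (rule imageI)
      then show ?thesis
        using True by (simp add: insert_absorb)
    qed (use \<open>X \<in> F\<close> assms(3) in auto)
  qed (use assms(3) in auto)
  then have "card F = card (?F0 \<union> insert x ` ?F1)"
    by (rule arg_cong)
  also have "\<dots> = card ?F0 + card (insert x ` ?F1)"
    using assms(1,2) by (intro card_Un_disjoint) auto
  also have "\<dots> = card ?F0 + card ?F1"
    using assms(2) by (subst card_image) (auto simp: inj_on_def)
  finally show ?thesis .
qed

lemma chebyshev_two_terms:
  fixes u0 u1 d0 d1 :: nat
  assumes "u0 \<le> u1" "d1 \<le> d0"
  shows "2 * (u0 * d0 + u1 * d1) \<le> (u0 + u1) * (d0 + d1)"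
proof -
  obtain p q where "u1 = u0 + p" "d0 = d1 + q"
    using assms le_Suc_ex by blast
  then show ?thesis by (simp add: algebra_simps)
qed

lemma is_up_set_sections:
  assumes "is_up_set (insert x S) U"
  shows "is_up_set S {Y \<in> Pow S. Y \<in> U}" "is_up_set S {Y \<in> Pow S. insert x Y \<in> U}"
    and "{Y \<in> Pow S. Y \<in> U} \<subseteq> {Y \<in> Pow S. insert x Y \<in> U}"
  using assms unfolding is_up_set_def by auto (meson insert_mono subset_insertI subset_insertI2)+

lemma is_down_set_sections:
  assumes "is_down_set (insert x S) D"
  shows "is_down_set S {Y \<in> Pow S. Y \<in> D}" "is_down_set S {Y \<in> Pow S. insert x Y \<in> D}"
    and "{Y \<in> Pow S. insert x Y \<in> D} \<subseteq> {Y \<in> Pow S. Y \<in> D}"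
  using assms unfolding is_down_set_def by auto (meson insert_mono)+

theorem harris_kleitman:
  assumes "finite S" "is_up_set S U" "is_down_set S D"
  shows "card (U \<inter> D) * 2 ^ card S \<le> card U * card D"
  using assms
proof (induction S arbitrary: U D rule: finite_induct)
  case empty
  then have "U \<subseteq> {{}}" "D \<subseteq> {{}}"
    by (auto simp: is_up_set_def is_down_set_def)
  then consider "U \<inter> D = {}" | "U = {{}}" "D = {{}}"
    by blast
  then show ?case by cases simp_all
next
  case (insert x S)
  define U0 where "U0 = {Y \<in> Pow S. Y \<in> U}"
  define U1 where "U1 = {Y \<in> Pow S. insert x Y \<in> U}"
  define D0 where "D0 = {Y \<in> Pow S. Y \<in> D}"
  define D1 where "D1 = {Y \<in> Pow S. insert x Y \<in> D}"
  have U: "is_up_set S U0" "is_up_set S U1" "U0 \<subseteq> U1"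
    using is_up_set_sections[OF insert.prems(1)] unfolding U0_def U1_def .
  have D: "is_down_set S D0" "is_down_set S D1" "D1 \<subseteq> D0"
    using is_down_set_sections[OF insert.prems(2)] unfolding D0_def D1_def .
  have "U \<subseteq> Pow (insert x S)" "D \<subseteq> Pow (insert x S)"
    using insert.prems by (simp_all add: is_up_set_def is_down_set_def)
  note card_split = card_split_by_element[OF insert.hyps(1,2)]
  have card_U: "card U = card U0 + card U1"
    unfolding U0_def U1_def by (rule card_split) fact
  have card_D: "card D = card D0 + card D1"
    unfolding D0_def D1_def by (rule card_split) fact
  have "card (U \<inter> D)
      = card {Y \<in> Pow S. Y \<in> U \<inter> D} + card {Y \<in> Pow S. insert x Y \<in> U \<inter> D}"
    using \<open>U \<subseteq> Pow (insert x S)\<close> by (intro card_split) (rule le_infI1)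
  also have "\<dots> = card (U0 \<inter> D0) + card (U1 \<inter> D1)"
    unfolding U0_def U1_def D0_def D1_def by (simp only: Int_iff Collect_conj_eq Int_ac Int_absorb)
  finally have card_UD: "card (U \<inter> D) = card (U0 \<inter> D0) + card (U1 \<inter> D1)" .
  have "card U0 \<le> card U1" "card D1 \<le> card D0"
    using U(3) D(3) insert.hyps(1) by (auto intro!: card_mono simp: U1_def D0_def)
  have "card (U \<inter> D) * 2 ^ card (insert x S)
      = 2 * (card (U0 \<inter> D0) * 2 ^ card S + card (U1 \<inter> D1) * 2 ^ card S)"
    using insert.hyps(1,2) card_UD by (simp add: algebra_simps)
  also have "\<dots> \<le> 2 * (card U0 * card D0 + card U1 * card D1)"
    using insert.IH U D by (simp add: add_mono)
  also have "\<dots> \<le> card U * card D"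
    unfolding card_U card_D by (rule chebyshev_two_terms) fact+
  finally show ?case .
qed

lemma card_add_card_le_if_no_complement:
  assumes "finite S" "F \<subseteq> Pow S" "G \<subseteq> Pow S" "\<forall>X\<in>F. S - X \<notin> G"
  shows "card F + card G \<le> 2 ^ card S"
proof -
  have "inj_on ((-) S) G"
    using assms(3) by (auto simp: inj_on_def)
  moreover have "F \<inter> (-) S ` G = {}"
    unfolding disjoint_iff
  proof (intro allI impI notI)
    fix X assume "X \<in> F" "X \<in> (-) S ` G"
    then have "S - X \<in> G"
      using assms(3) by (auto simp: Diff_Diff_Int Int_absorb1)
    then show False
      using \<open>X \<in> F\<close> assms(4) by blast
  qed
  moreover have "finite F" "finite G"
    using assms(1-3) by (auto intro: finite_subset)
  ultimately have "card F + card G = card (F \<union> (-) S ` G)"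
    by (simp add: card_Un_disjoint card_image)
  also have "\<dots> \<le> card (Pow S)"
    using assms(1,2) by (intro card_mono) auto
  finally show ?thesis
    using assms(1) by (simp add: card_Pow)
qed

definition up_closure :: "'a set \<Rightarrow> 'a set set \<Rightarrow> 'a set set" where
  "up_closure S F = {X \<in> Pow S. \<exists>A\<in>F. A \<subseteq> X}"

definition down_closure :: "'a set \<Rightarrow> 'a set set \<Rightarrow> 'a set set" where
  "down_closure S F = {X \<in> Pow S. \<exists>A\<in>F. X \<subseteq> A}"

lemma card_mul_le_card_up_closure_mul_card_down_closure:
  assumes "finite S" "F \<subseteq> Pow S"
  shows "card F * 2 ^ card S \<le> card (up_closure S F) * card (down_closure S F)"
proof -
  have "F \<subseteq> up_closure S F \<inter> down_closure S F"
    using assms(2) by (auto simp: up_closure_def down_closure_def)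
  then have "card F \<le> card (up_closure S F \<inter> down_closure S F)"
    using assms(1) by (intro card_mono) (auto simp: up_closure_def)
  also have "\<dots> * 2 ^ card S \<le> card (up_closure S F) * card (down_closure S F)"
    using assms(1) by (rule harris_kleitman)
      (auto simp: is_up_set_def is_down_set_def up_closure_def down_closure_def)
  finally show ?thesis
    by simp
qed

lemma no_complement_in_up_closures:
  assumes "\<forall>A\<in>\<A>. \<forall>B\<in>\<B>. A \<inter> B \<noteq> {}"
  shows "\<forall>X\<in>up_closure S \<A>. S - X \<notin> up_closure S \<B>"
proof (intro ballI notI)
  fix X assume "X \<in> up_closure S \<A>" "S - X \<in> up_closure S \<B>"
  then obtain A B where "A \<in> \<A>" "B \<in> \<B>" "A \<subseteq> X" "B \<subseteq> S - X"
    unfolding up_closure_def by blast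
  then show False
    using assms by blast
qed

lemma no_complement_in_down_closures:
  assumes "\<A> \<subseteq> Pow S" "\<B> \<subseteq> Pow S" "\<forall>A\<in>\<A>. \<forall>B\<in>\<B>. A \<union> B \<noteq> S"
  shows "\<forall>X\<in>down_closure S \<A>. S - X \<notin> down_closure S \<B>"
proof (intro ballI notI)
  fix X assume "X \<in> down_closure S \<A>" "S - X \<in> down_closure S \<B>"
  then obtain A B where "A \<in> \<A>" "B \<in> \<B>" "X \<subseteq> A" "S - X \<subseteq> B"
    unfolding down_closure_def by blast
  moreover from this have "A \<union> B = S"
    using assms(1,2) by blast
  ultimately show False
    using assms(3) by blast
qed

lemma four_mul_le_mul_add:
  fixes u v N :: real
  assumes "0 \<le> u" "0 \<le> v" "u + v \<le> N"
  shows "4 * u * v \<le> N * (u + v)"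
proof -
  have "4 * u * v \<le> (u + v) * (u + v)"
    using zero_le_square[of "u - v"] by (simp add: algebra_simps)
  also have "\<dots> \<le> N * (u + v)"
    using assms by (intro mult_right_mono) simp_all
  finally show ?thesis .
qed

lemma add_three_mul_le_of_product_bounds:
  fixes a b x y x' y' N :: real
  assumes "a * N \<le> x * y" "b * N \<le> x' * y'" "b \<le> a"
    and "x + x' \<le> N" "y + y' \<le> N"
    and "0 \<le> x" "0 \<le> y" "0 \<le> x'" "0 \<le> y'" "0 < N"
  shows "a + 3 * b \<le> N"
proof -
  have "(a + 3 * b) * N \<le> N * N"
  proof (cases "x + y \<le> N")
    case True
    have "(a + 3 * b) * N \<le> 4 * (a * N)"
      using assms(3,10) by simp
    also have "\<dots> \<le> 4 * x * y"
      using assms(1) by simp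
    also have "\<dots> \<le> N * (x + y)"
      using four_mul_le_mul_add True assms(6,7) by blast
    also have "\<dots> \<le> N * N"
      using True assms(10) by simp
    finally show ?thesis .
  next
    case False
    \<comment> \<open>now the complements satisfy (N - x) + (N - y) < N, so the same bound applies to them\<close>
    have "x' * y' \<le> (N - x) * (N - y)"
      using assms(4-9) by (intro mult_mono) simp_all
    then have "(a + 3 * b) * N \<le> x * y + 3 * ((N - x) * (N - y))"
      using assms(1,2) by (simp add: algebra_simps)
    also have "\<dots> = 4 * (N - x) * (N - y) + N * (x + y) - N * N"
      by (simp add: algebra_simps)
    also have "\<dots> \<le> N * ((N - x) + (N - y)) + N * (x + y) - N * N"
      using four_mul_le_mul_add[of "N - x" "N - y" N] False assms(4-9) by simp
    also have "\<dots> = N * N"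
      by (simp add: algebra_simps)
    finally show ?thesis .
  qed
  then show ?thesis
    using assms(10) by simp
qed

lemma add_three_mul_le_of_product_bounds_nat:
  fixes a b x y x' y' N :: nat
  assumes "a * N \<le> x * y" "b * N \<le> x' * y'" "b \<le> a"
    and "x + x' \<le> N" "y + y' \<le> N" "0 < N"
  shows "a + 3 * b \<le> N"
proof -
  have "real a + 3 * real b \<le> real N"
    by (rule add_three_mul_le_of_product_bounds[where x = "real x" and y = "real y"
          and x' = "real x'" and y' = "real y'"])
      (use assms in \<open>simp_all flip: of_nat_mult of_nat_add\<close>)
  then show ?thesis by linarith
qed

theorem theorem3p3:
  fixes n :: nat and \<A> \<B> :: "nat set set"
  assumes "\<A> \<subseteq> Pow {1..n}" and "\<B> \<subseteq> Pow {1..n}"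
    and "cross_IU n \<A> \<B>"
    and "card \<A> \<ge> card \<B>"
  shows "card \<A> + 3 * card \<B> \<le> 2 ^ n"
proof -
  let ?S = "{1..n}"
  have "finite ?S" and card_S: "2 ^ card ?S = (2::nat) ^ n"
    by simp_all
  have cross: "\<forall>A\<in>\<A>. \<forall>B\<in>\<B>. A \<inter> B \<noteq> {}" "\<forall>A\<in>\<A>. \<forall>B\<in>\<B>. A \<union> B \<noteq> ?S"
    using assms(3) unfolding cross_IU_def by blast+
  have "card \<A> * 2 ^ n \<le> card (up_closure ?S \<A>) * card (down_closure ?S \<A>)"
    using card_mul_le_card_up_closure_mul_card_down_closure[OF \<open>finite ?S\<close> assms(1)]
    unfolding card_S .
  moreover have "card \<B> * 2 ^ n \<le> card (up_closure ?S \<B>) * card (down_closure ?S \<B>)"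
    using card_mul_le_card_up_closure_mul_card_down_closure[OF \<open>finite ?S\<close> assms(2)]
    unfolding card_S .
  moreover have "card (up_closure ?S \<A>) + card (up_closure ?S \<B>) \<le> 2 ^ n"
    using card_add_card_le_if_no_complement[OF \<open>finite ?S\<close> _ _
        no_complement_in_up_closures[OF cross(1)]]
    unfolding card_S up_closure_def by blast
  moreover have "card (down_closure ?S \<A>) + card (down_closure ?S \<B>) \<le> 2 ^ n"
    using card_add_card_le_if_no_complement[OF \<open>finite ?S\<close> _ _
        no_complement_in_down_closures[OF assms(1,2) cross(2)]]
    unfolding card_S down_closure_def by blast
  ultimately show ?thesis
    using assms(4)
    by (intro add_three_mul_le_of_product_bounds_nat[where x = "card (up_closure ?S \<A>)"
          and y = "card (down_closure ?S \<A>)"]) auto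
qed

end
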